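(* In the setting of the context, $K_1(\theta_0,\theta_0+c)\downarrow K_1$ and $K_1(\theta_0-c,\theta_0)\downarrow K_1$ as $c\downarrow0$.
   Context: Let $G\in\mathrm{C}^2(\mathbb{R})$ be coercive ($G(p)\to\infty$ as $p\to\pm\infty$), $p_1<p_2$ with $G'(p_1)<0<G'(p_2)$, $L=\frac{G'(p_2)}{G'(p_2)-G'(p_1)}$, $\ell\in(0,\min\{L,1-L\})$, and $K_1=\max\{|G'(p)|:\,p\in[p_1,p_2]\}$. Let $f$ be a $1$-periodic function in $\mathrm{C}^1(\mathbb{R})$ with $f'$ Lipschitz, $p_1\le f\le p_2$, $f=p_1$ on $[0,L-\ell]$, $f=p_2$ on $[L,1-\ell]$, and $\int_0^1G'(f(x))dx=0$. Define the $1$-periodic Lipschitz potential $V(x)=-f'(x)-G(f(x))$ and $\theta_0=\int_0^1f(x)dx$. For each $\theta\in\mathbb{R}$, $f_\theta\in\mathrm{C}^1(\mathbb{R})$ denotes the unique $1$-periodic function with $\int_0^1f_\theta=\theta$ and $f_\theta'+G(f_\theta)+V=\overline{H}(\theta)$ on $\mathbb{R}$ for some (unique) constant $\overline{H}(\theta)$. For $\theta_1<\theta_2$, $K_1(\theta_1,\theta_2)=\max\{|G'(p)|:\,\min_{[0,1]}f_{\theta_1}\le p\le\max_{[0,1]}f_{\theta_2}\}$. *)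

theory Defs
  imports "HOL-Analysis.Analysis"
begin

text \<open>K_1(theta1,theta2) = max{|G'(p)| : min f_theta1 <= p <= max f_theta2},
  where F theta is the cell solution f_theta (a 1-periodic continuous function,
  so min/max over [0,1] are Inf/Sup of its image of {0..1}).\<close>
definition K1_pair :: "(real \<Rightarrow> real) \<Rightarrow> (real \<Rightarrow> real \<Rightarrow> real) \<Rightarrow> real \<Rightarrow> real \<Rightarrow> real" where
  "K1_pair G' F \<theta>1 \<theta>2 =
     Sup ((\<lambda>p. \<bar>G' p\<bar>) ` {Inf (F \<theta>1 ` {0..1}) .. Sup (F \<theta>2 ` {0..1})})"

end

theory Submission
  imports Defs
begin

text \<open>
  Periodic solutions of the cell problem u' + G(u) + V = const are ordered like their means:
  if u > v somewhere although u has the smaller mean, then u - v changes sign, a downward and an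
  upward crossing of zero force the two constants to agree, and Gronwall's inequality (G being
  locally Lipschitz) then makes u - v vanish identically.
  The derivative of a periodic solution vanishes at a maximum, which bounds the constant and hence
  the derivative, so solutions whose means lie in a bounded interval are uniformly Lipschitz.
  As the family is ordered, the integral of |f_s - f_t| over a period is |s - t|, and a
  nonnegative Lipschitz function with small integral is uniformly small. Hence theta maps
  continuously to f_theta in the sup norm, f_theta0 = f, and min f_theta, max f_theta are monotone
  and continuous in theta; so is the maximum of |G'| over [min f_theta1, max f_theta2].
\<close>

lemma has_real_derivative_imp_continuous_on:
  assumes "\<And>x. (u has_real_derivative u' x) (at x)"
  shows "continuous_on S u"
  by (meson DERIV_isCont assms continuous_at_imp_continuous_on)

lemma lipschitz_on_if_abs_deriv_le:
  assumes "\<And>x. x \<in> {a..b} \<Longrightarrow> (g has_real_derivative g' x) (at x)"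
    and "\<And>x. x \<in> {a..b} \<Longrightarrow> \<bar>g' x\<bar> \<le> M" and "0 \<le> M"
  shows "M-lipschitz_on {a..b} g"
proof (rule lipschitz_onI)
  fix x y assume "x \<in> {a..b}" "y \<in> {a..b}"
  then show "dist (g x) (g y) \<le> M * dist x y"
    using field_differentiable_bound[of "{a..b}" g g' M x y] assms
    by (auto simp: dist_real_def has_field_derivative_at_within)
qed fact

lemma continuous_on_if_lipschitz_estimate:
  fixes g :: "real \<Rightarrow> real"
  assumes "\<And>x y. \<bar>g x - g y\<bar> \<le> C * \<bar>x - y\<bar>"
  shows "continuous_on S g"
proof -
  have "\<bar>C\<bar>-lipschitz_on UNIV g"
    by (intro lipschitz_onI)
      (simp_all add: dist_real_def order_trans[OF assms mult_right_mono[OF abs_ge_self abs_ge_zero]])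
  then show ?thesis
    by (rule continuous_on_subset[OF lipschitz_on_continuous_on subset_UNIV])
qed

section \<open>Maxima over moving intervals and under uniform convergence\<close>

lemma bdd_above_image_atLeastAtMost:
  fixes h :: "real \<Rightarrow> real"
  assumes "continuous_on UNIV h"
  shows "bdd_above (h ` {a..b})"
  using assms by (intro bounded_imp_bdd_above compact_imp_bounded compact_continuous_image)
    (auto intro: continuous_on_subset)

lemma Sup_image_atLeastAtMost_mono:
  fixes h :: "real \<Rightarrow> real"
  assumes "continuous_on UNIV h" and "a \<le> b" "a' \<le> a" "b \<le> b'"
  shows "Sup (h ` {a..b}) \<le> Sup (h ` {a'..b'})"
  using assms by (intro cSup_subset_mono bdd_above_image_atLeastAtMost) auto

lemma tendsto_Sup_image_atLeastAtMost:
  fixes h :: "real \<Rightarrow> real"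
  assumes h: "continuous_on UNIV h" and "a \<le> b"
    and r: "(r \<longlongrightarrow> a) F" and s: "(s \<longlongrightarrow> b) F"
    and outside: "\<forall>\<^sub>F x in F. r x \<le> a \<and> b \<le> s x"
  shows "((\<lambda>x. Sup (h ` {r x..s x})) \<longlongrightarrow> Sup (h ` {a..b})) F"
proof (rule tendstoI)
  fix e :: real assume "0 < e"
  have "isCont h a" "isCont h b"
    using h by (simp_all add: continuous_on_eq_continuous_at)
  then obtain d where "0 < d"
    and d: "\<And>p. \<bar>p - a\<bar> < d \<Longrightarrow> \<bar>h p - h a\<bar> < e/2" "\<And>p. \<bar>p - b\<bar> < d \<Longrightarrow> \<bar>h p - h b\<bar> < e/2"
    using \<open>0 < e\<close> unfolding continuous_at_eps_delta dist_real_def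
    by (metis (full_types) half_gt_zero_iff min_less_iff_conj)
  have "\<forall>\<^sub>F x in F. dist (r x) a < d" "\<forall>\<^sub>F x in F. dist (s x) b < d"
    using tendstoD[OF r \<open>0 < d\<close>] tendstoD[OF s \<open>0 < d\<close>] by auto
  with outside show "\<forall>\<^sub>F x in F. dist (Sup (h ` {r x..s x})) (Sup (h ` {a..b})) < e"
  proof eventually_elim
    case (elim x)
    have ab: "h a \<le> Sup (h ` {a..b})" "h b \<le> Sup (h ` {a..b})"
      using \<open>a \<le> b\<close> by (auto intro!: cSup_upper bdd_above_image_atLeastAtMost h)
    have "h p \<le> Sup (h ` {a..b}) + e/2" if "p \<in> {r x..s x}" for p
    proof -
      consider "p < a" | "b < p" | "p \<in> {a..b}" by fastforce
      then show ?thesis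
      proof cases
        case 1
        then have "\<bar>h p - h a\<bar> < e/2" using d(1) elim that by (auto simp: dist_real_def)
        then show ?thesis using ab by linarith
      next
        case 2
        then have "\<bar>h p - h b\<bar> < e/2" using d(2) elim that by (auto simp: dist_real_def)
        then show ?thesis using ab by linarith
      next
        case 3
        then have "h p \<le> Sup (h ` {a..b})"
          by (auto intro!: cSup_upper bdd_above_image_atLeastAtMost h)
        then show ?thesis using \<open>0 < e\<close> by linarith
      qed
    qed
    then have "Sup (h ` {r x..s x}) \<le> Sup (h ` {a..b}) + e/2"
      using elim \<open>a \<le> b\<close> by (intro cSup_least) auto
    moreover have "Sup (h ` {a..b}) \<le> Sup (h ` {r x..s x})"
      using elim \<open>a \<le> b\<close> by (intro Sup_image_atLeastAtMost_mono h) auto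
    ultimately show ?case using \<open>0 < e\<close> by (simp add: dist_real_def)
  qed
qed

lemma tendsto_Sup_image_if_uniform_limit:
  fixes g :: "'a \<Rightarrow> 'b \<Rightarrow> real"
  assumes lim: "uniform_limit S g l F" and "S \<noteq> {}"
    and bdd: "\<And>c. bdd_above (g c ` S)" and "bdd_above (l ` S)"
  shows "((\<lambda>c. Sup (g c ` S)) \<longlongrightarrow> Sup (l ` S)) F"
proof (rule tendstoI)
  fix e :: real assume "0 < e"
  from uniform_limitD[OF lim, of "e/2"] \<open>0 < e\<close>
  have "\<forall>\<^sub>F c in F. \<forall>x\<in>S. \<bar>g c x - l x\<bar> < e/2" by (simp add: dist_real_def)
  then show "\<forall>\<^sub>F c in F. dist (Sup (g c ` S)) (Sup (l ` S)) < e"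
  proof eventually_elim
    case (elim c)
    have "Sup (g c ` S) \<le> Sup (l ` S) + e/2"
    proof (rule cSup_least)
      fix y assume "y \<in> g c ` S"
      then obtain x where "x \<in> S" "y = g c x" by blast
      moreover have "l x \<le> Sup (l ` S)"
        using \<open>x \<in> S\<close> \<open>bdd_above (l ` S)\<close> by (auto intro: cSup_upper)
      moreover have "\<bar>g c x - l x\<bar> < e/2" using elim \<open>x \<in> S\<close> by blast
      ultimately show "y \<le> Sup (l ` S) + e/2" by arith
    qed (use \<open>S \<noteq> {}\<close> in auto)
    moreover have "Sup (l ` S) \<le> Sup (g c ` S) + e/2"
    proof (rule cSup_least)
      fix y assume "y \<in> l ` S"
      then obtain x where "x \<in> S" "y = l x" by blast
      moreover have "g c x \<le> Sup (g c ` S)"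
        using \<open>x \<in> S\<close> bdd by (auto intro: cSup_upper)
      moreover have "\<bar>g c x - l x\<bar> < e/2" using elim \<open>x \<in> S\<close> by blast
      ultimately show "y \<le> Sup (g c ` S) + e/2" by arith
    qed (use \<open>S \<noteq> {}\<close> in auto)
    ultimately show ?case using \<open>0 < e\<close> by (simp add: dist_real_def)
  qed
qed

lemma tendsto_Inf_image_if_uniform_limit:
  fixes g :: "'a \<Rightarrow> 'b \<Rightarrow> real"
  assumes lim: "uniform_limit S g l F" and "S \<noteq> {}"
    and bdd: "\<And>c. bdd_below (g c ` S)" and "bdd_below (l ` S)"
  shows "((\<lambda>c. Inf (g c ` S)) \<longlongrightarrow> Inf (l ` S)) F"
proof -
  have "((\<lambda>c. Sup ((\<lambda>x. - g c x) ` S)) \<longlongrightarrow> Sup ((\<lambda>x. - l x) ` S)) F"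
    using assms
    by (intro tendsto_Sup_image_if_uniform_limit uniform_limit_uminus)
      (auto simp: bdd_above_uminus[symmetric] image_image)
  then show ?thesis
    unfolding Inf_real_def image_image by (rule tendsto_minus)
qed

section \<open>Nonnegative Lipschitz functions with small integral\<close>

lemma integral_ge_if_lipschitz_nonneg:
  fixes g :: "real \<Rightarrow> real"
  assumes lip: "M-lipschitz_on {0..1} g" and "0 < M"
    and nonneg: "\<And>x. x \<in> {0..1} \<Longrightarrow> 0 \<le> g x"
    and y: "y \<in> {0..1}" and "0 < e" and "e \<le> g y"
  shows "e/2 * min (1/2) (e/(2*M)) \<le> integral {0..1} g"
proof -
  define r where "r = min (1/2) (e/(2*M))"
  have "0 < r" using \<open>0 < M\<close> \<open>0 < e\<close> by (simp add: r_def)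
  obtain lo where lo: "y \<in> {lo..lo + r}" "{lo..lo + r} \<subseteq> {0..1}"
  proof (cases "y \<le> 1/2")
    case True
    then show ?thesis using that[of y] y \<open>0 < r\<close> by (auto simp: r_def)
  next
    case False
    then show ?thesis using that[of "y - r"] y \<open>0 < r\<close> by (auto simp: r_def)
  qed
  have "M * r \<le> e/2"
    using \<open>0 < M\<close> by (simp add: r_def min_def field_simps)
  have lower: "e/2 \<le> g x" if "x \<in> {lo..lo + r}" for x
  proof -
    have "\<bar>g y - g x\<bar> \<le> M * \<bar>y - x\<bar>"
      using lipschitz_onD[OF lip, of y x] lo that y by (auto simp: dist_real_def)
    also have "\<dots> \<le> M * r"
      using lo that \<open>0 < M\<close> by (intro mult_left_mono) auto
    finally show ?thesis using \<open>M * r \<le> e/2\<close> \<open>e \<le> g y\<close> by linarith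
  qed
  have cont: "continuous_on {0..1} g"
    using lip by (rule lipschitz_on_continuous_on)
  have "e/2 * r = integral {lo..lo + r} (\<lambda>_. e/2)"
    using \<open>0 < r\<close> by simp
  also have "\<dots> \<le> integral {lo..lo + r} g"
    using lower lo by (intro integral_le integrable_continuous_interval
        continuous_on_subset[OF cont]) auto
  also have "\<dots> \<le> integral {0..1} g"
    using lo nonneg by (intro integral_subset_le integrable_continuous_interval
        continuous_on_subset[OF cont]) auto
  finally show ?thesis unfolding r_def .
qed

lemma uniform_limit_zero_if_integral_tendsto_zero:
  fixes g :: "'a \<Rightarrow> real \<Rightarrow> real"
  assumes lip: "\<forall>\<^sub>F c in F. M-lipschitz_on {0..1} (g c) \<and> (\<forall>x\<in>{0..1}. 0 \<le> g c x)"
    and int: "((\<lambda>c. integral {0..1} (g c)) \<longlongrightarrow> 0) F"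
  shows "uniform_limit {0..1} g (\<lambda>_. 0) F"
proof (rule uniform_limitI)
  fix e :: real assume "0 < e"
  define M' where "M' = \<bar>M\<bar> + 1"
  have "0 < M'" by (simp add: M'_def)
  then have "0 < e/2 * min (1/2) (e/(2*M'))" using \<open>0 < e\<close> by simp
  from tendstoD[OF int this]
  have "\<forall>\<^sub>F c in F. integral {0..1} (g c) < e/2 * min (1/2) (e/(2*M'))"
    by (rule eventually_mono) (simp add: dist_real_def)
  with lip show "\<forall>\<^sub>F c in F. \<forall>x\<in>{0..1}. dist (g c x) 0 < e"
  proof eventually_elim
    case (elim c)
    then have lip': "M'-lipschitz_on {0..1} (g c)"
      by (auto simp: M'_def intro: lipschitz_on_le)
    show ?case
    proof (intro ballI)
      fix x :: real assume x: "x \<in> {0..1}"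
      have "\<not> e \<le> g c x"
        using integral_ge_if_lipschitz_nonneg[OF lip' \<open>0 < M'\<close> _ x \<open>0 < e\<close>] elim by force
      then show "dist (g c x) 0 < e" using elim x by (simp add: dist_real_def)
    qed
  qed
qed

section \<open>The comparison principle for periodic cell solutions\<close>

lemma lipschitz_on_atLeastAtMost_if_continuous_deriv:
  assumes "\<And>x. (g has_real_derivative g' x) (at x)" and "continuous_on UNIV g'"
  obtains M where "M-lipschitz_on {a..b} g"
proof -
  obtain M where "0 \<le> M" "\<And>x. x \<in> {a..b} \<Longrightarrow> \<bar>g' x\<bar> \<le> M"
    using continuous_on_compact_bound[of "{a..b}" g'] assms(2)
    by (metis compact_Icc continuous_on_subset real_norm_def top_greatest)
  then show ?thesis using assms(1) lipschitz_on_if_abs_deriv_le that by blast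
qed

definition cell_solution ::
    "(real \<Rightarrow> real) \<Rightarrow> (real \<Rightarrow> real) \<Rightarrow> (real \<Rightarrow> real) \<Rightarrow> (real \<Rightarrow> real) \<Rightarrow> bool" where
  "cell_solution G V u u' \<longleftrightarrow>
     (\<forall>x. (u has_real_derivative u' x) (at x)) \<and> (\<forall>x. u (x + 1) = u x) \<and>
     (\<exists>H. \<forall>x. u' x + G (u x) + V x = H)"

lemma down_crossing:
  assumes d: "\<And>x. (w has_real_derivative w' x) (at x)"
    and "a < b" and "0 < w a" and "w b < 0"
  obtains s where "a < s" "s < b" "w s = 0" "w' s \<le> 0"
proof -
  have cont: "continuous_on S w" for S
    using d by (rule has_real_derivative_imp_continuous_on)
  define S where "S = {a..b} \<inter> {x. 0 \<le> w x}"
  have "closed S"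
    unfolding S_def by (intro closed_Int closed_atLeastAtMost closed_Collect_le cont continuous_on_const)
  moreover have "a \<in> S" "bdd_above S"
    using \<open>0 < w a\<close> \<open>a < b\<close> by (auto simp: S_def intro: bdd_aboveI[of _ b])
  ultimately have "Sup S \<in> S"
    by (intro closed_contains_Sup) auto
  define s where "s = Sup S"
  have upper: "x \<le> s" if "x \<in> S" for x
    unfolding s_def using cSup_upper[OF that \<open>bdd_above S\<close>] .
  have s: "a \<le> s" "s < b" "0 \<le> w s"
    using \<open>Sup S \<in> S\<close> \<open>w b < 0\<close> by (auto simp: S_def s_def order.order_iff_strict)
  have neg: "w x < 0" if "s < x" "x \<le> b" for x
    using upper[of x] that s by (force simp: S_def)
  have "w s = 0"
  proof (rule ccontr)
    assume "w s \<noteq> 0"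
    then obtain z where "s \<le> z" "z \<le> b" "w z = 0"
      using IVT2'[of w b 0 s] s \<open>w b < 0\<close> cont by force
    then show False using neg[of z] \<open>w s \<noteq> 0\<close> by (cases "s = z") auto
  qed
  moreover have "w' s \<le> 0"
  proof (rule ccontr)
    assume "\<not> w' s \<le> 0"
    then obtain e where "0 < e" and inc: "\<And>h. 0 < h \<Longrightarrow> h < e \<Longrightarrow> w s < w (s + h)"
      using DERIV_pos_inc_right[OF d[of s]] by force
    define h where "h = min (e/2) (b - s)"
    have "0 < h" "h < e" "s + h \<le> b" using \<open>0 < e\<close> s by (auto simp: h_def)
    then show False using inc[of h] neg[of "s + h"] \<open>w s = 0\<close> by auto
  qed
  moreover have "a < s" using s \<open>w s = 0\<close> \<open>0 < w a\<close> by (cases "a = s") auto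
  ultimately show ?thesis using that s by blast
qed

lemma gronwall_vanishing:
  fixes w w' :: "real \<Rightarrow> real"
  assumes d: "\<And>x. x \<in> {s..b} \<Longrightarrow> (w has_real_derivative w' x) (at x)"
    and bound: "\<And>x. x \<in> {s..b} \<Longrightarrow> \<bar>w' x\<bar> \<le> K * \<bar>w x\<bar>"
    and "w s = 0" and "s \<le> b"
  shows "w b = 0"
proof -
  define \<phi> where "\<phi> x = exp (-(2*K*x)) * (w x)\<^sup>2" for x
  have "\<phi> b \<le> \<phi> s"
  proof (rule DERIV_nonpos_imp_nonincreasing[OF \<open>s \<le> b\<close>])
    fix x assume x: "s \<le> x" "x \<le> b"
    have "w x * w' x \<le> \<bar>w x\<bar> * \<bar>w' x\<bar>" by (metis abs_ge_self abs_mult)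
    also have "\<dots> \<le> \<bar>w x\<bar> * (K * \<bar>w x\<bar>)"
      using bound[of x] x by (simp add: mult_left_mono)
    also have "\<dots> = K * (w x)\<^sup>2"
      by (simp add: power2_eq_square)
    finally have "exp (-(2*K*x)) * (2 * w x * w' x - 2*K * (w x)\<^sup>2) \<le> 0"
      by (simp add: mult_nonneg_nonpos)
    moreover have "(\<phi> has_real_derivative exp (-(2*K*x)) * (2 * w x * w' x - 2*K * (w x)\<^sup>2)) (at x)"
      unfolding \<phi>_def using x
      by (auto intro!: derivative_eq_intros d simp: power2_eq_square algebra_simps)
    ultimately show "\<exists>y. (\<phi> has_real_derivative y) (at x) \<and> y \<le> 0" by blast
  qed
  then have "(w b)\<^sup>2 \<le> 0"
    using \<open>w s = 0\<close> by (simp add: \<phi>_def mult_le_0_iff)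
  then show ?thesis by simp
qed

lemma ode_solution_unique_forward:
  assumes du: "\<And>x. (u has_real_derivative u' x) (at x)"
    and dv: "\<And>x. (v has_real_derivative v' x) (at x)"
    and eq_u: "\<And>x. u' x + G (u x) + V x = H" and eq_v: "\<And>x. v' x + G (v x) + V x = H"
    and G: "\<And>p. (G has_real_derivative G' p) (at p)" and G': "continuous_on UNIV G'"
    and "u s = v s" and "s \<le> b"
  shows "u b = v b"
proof -
  have cu: "continuous_on S u" and cv: "continuous_on S v" for S
    using du dv by (auto intro: has_real_derivative_imp_continuous_on)
  obtain B where B: "\<And>y. y \<in> {s..b} \<Longrightarrow> \<bar>u y\<bar> \<le> B \<and> \<bar>v y\<bar> \<le> B"
  proof -
    obtain Bu Bv where "\<And>y. y \<in> {s..b} \<Longrightarrow> \<bar>u y\<bar> \<le> Bu" "\<And>y. y \<in> {s..b} \<Longrightarrow> \<bar>v y\<bar> \<le> Bv"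
      using continuous_on_compact_bound[OF compact_Icc cu] continuous_on_compact_bound[OF compact_Icc cv]
      by (metis real_norm_def)
    then show ?thesis using that[of "max Bu Bv"] by fastforce
  qed
  obtain K where K: "K-lipschitz_on {-B..B} G"
    using lipschitz_on_atLeastAtMost_if_continuous_deriv[OF G G'] .
  have "u b - v b = 0"
  proof (rule gronwall_vanishing[where w = "\<lambda>y. u y - v y" and w' = "\<lambda>y. u' y - v' y"])
    fix y assume y: "y \<in> {s..b}"
    show "((\<lambda>y. u y - v y) has_real_derivative u' y - v' y) (at y)"
      by (intro derivative_intros du dv)
    have "u' y - v' y = G (v y) - G (u y)"
      using eq_u[of y] eq_v[of y] by simp
    then show "\<bar>u' y - v' y\<bar> \<le> K * \<bar>u y - v y\<bar>"
      using lipschitz_onD[OF K, of "v y" "u y"] B[OF y]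
      by (simp add: dist_real_def abs_minus_commute abs_le_iff)
  qed (use assms in auto)
  then show ?thesis by simp
qed

lemma cell_solution_le:
  assumes u: "cell_solution G V u u'" and v: "cell_solution G V v v'"
    and G: "\<And>p. (G has_real_derivative G' p) (at p)" and G': "continuous_on UNIV G'"
    and int: "integral {0..1} u < integral {0..1} v"
  shows "u x \<le> v x"
proof (rule ccontr)
  assume "\<not> u x \<le> v x"
  obtain Hu Hv where du: "\<And>x. (u has_real_derivative u' x) (at x)"
    and dv: "\<And>x. (v has_real_derivative v' x) (at x)"
    and eq_u: "\<And>x. u' x + G (u x) + V x = Hu" and eq_v: "\<And>x. v' x + G (v x) + V x = Hv"
    and "\<And>x. u (x + 1) = u x" "\<And>x. v (x + 1) = v x"
    using u v unfolding cell_solution_def by blast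
  then interpret u: periodic_fun_simple' u + v: periodic_fun_simple' v
    by unfold_locales
  have cu: "continuous_on S u" and cv: "continuous_on S v" for S
    using du dv by (auto intro: has_real_derivative_imp_continuous_on)
  define w where "w y = v y - u y" for y
  define w' where "w' y = v' y - u' y" for y
  have dw: "(w has_real_derivative w' y) (at y)" for y
    unfolding w_def w'_def by (intro derivative_intros du dv)
  have w_per: "w (y + real n) = w y" for y n
    unfolding w_def using u.plus_of_nat v.plus_of_nat by simp
  have w'_at_zero: "w' y = Hv - Hu" if "w y = 0" for y
    using that eq_u[of y] eq_v[of y] by (simp add: w_def w'_def)
  have "\<exists>x2\<in>{0..1}. 0 < w x2"
  proof (rule ccontr)
    assume "\<not> ?thesis"
    then have "integral {0..1} v \<le> integral {0..1} u"
      by (intro integral_le integrable_continuous_interval cu cv) (auto simp: w_def not_less)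
    then show False using int by simp
  qed
  then obtain x2 where "0 < w x2" by blast
  obtain n m :: nat where n: "x2 < x + real n" and m: "x < x2 + real m"
    by (metis add.commute diff_less_eq reals_Archimedean2)
  have "w x < 0"
    using \<open>\<not> u x \<le> v x\<close> by (simp add: w_def)
  then have "w (x + real n) < 0" "0 < w (x2 + real m)"
    using w_per \<open>0 < w x2\<close> by auto
  obtain s1 where s1: "x2 < s1" "s1 < x + real n" "w s1 = 0" "w' s1 \<le> 0"
    using down_crossing[OF dw n \<open>0 < w x2\<close> \<open>w (x + real n) < 0\<close>] .
  have "((\<lambda>y. - w y) has_real_derivative - w' y) (at y)" for y
    by (intro derivative_intros dw)
  from down_crossing[OF this m] obtain s2 where "w s2 = 0" "0 \<le> w' s2"
    using \<open>w x < 0\<close> \<open>0 < w (x2 + real m)\<close> by auto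
  have "Hu = Hv"
    using w'_at_zero s1 \<open>w s2 = 0\<close> \<open>0 \<le> w' s2\<close> by force
  have "v (x + real n) = u (x + real n)"
    by (rule ode_solution_unique_forward[OF dv du eq_v eq_u[unfolded \<open>Hu = Hv\<close>] G G'])
      (use s1 in \<open>auto simp: w_def\<close>)
  then show False using \<open>w (x + real n) < 0\<close> by (simp add: w_def)
qed

lemma cell_solution_deriv_bound:
  assumes "cell_solution G V u u'"
    and G_bound: "\<And>x. x \<in> {0..1} \<Longrightarrow> \<bar>G (u x)\<bar> \<le> A"
    and V_bound: "\<And>x. x \<in> {0..1} \<Longrightarrow> \<bar>V x\<bar> \<le> B"
    and x: "x \<in> {0..1}"
  shows "\<bar>u' x\<bar> \<le> 2 * (A + B)"
proof -
  obtain H where du: "\<And>x. (u has_real_derivative u' x) (at x)"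
    and eq: "\<And>x. u' x + G (u x) + V x = H" and "\<And>x. u (x + 1) = u x"
    using assms(1) unfolding cell_solution_def by blast
  then interpret periodic_fun_simple' u
    by unfold_locales
  obtain xm where xm: "xm \<in> {0..1}" "\<And>y. y \<in> {0..1} \<Longrightarrow> u y \<le> u xm"
    using continuous_attains_sup[of "{0..1}" u] du
    by (metis atLeastAtMost_iff compact_Icc has_real_derivative_imp_continuous_on
        order.refl zero_le_one empty_iff)
  have "u y \<le> u xm" for y
  proof -
    have "u y = u (frac y)"
      using plus_of_int[of "frac y" "\<lfloor>y\<rfloor>"] by (simp add: frac_def)
    then show ?thesis using xm(2)[of "frac y"] by (simp add: frac_ge_0 frac_lt_1 less_imp_le)
  qed
  then have "u' xm = 0"
    by (intro DERIV_local_max[OF du, of 1]) auto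
  then have "\<bar>H\<bar> \<le> A + B"
    using eq[of xm] G_bound[OF xm(1)] V_bound[OF xm(1)] by linarith
  then show ?thesis
    using eq[of x] G_bound[OF x] V_bound[OF x] by (simp add: abs_le_iff)
qed

section \<open>The family of cell solutions\<close>

locale periodic_cell_problem =
  fixes G G' V :: "real \<Rightarrow> real" and F F' :: "real \<Rightarrow> real \<Rightarrow> real"
  assumes G_deriv: "\<And>p. (G has_real_derivative G' p) (at p)"
    and G'_cont: "continuous_on UNIV G'"
    and V_cont: "continuous_on UNIV V"
    and F_solution: "\<And>\<theta>. cell_solution G V (F \<theta>) (F' \<theta>)"
    and F_integral: "\<And>\<theta>. integral {0..1} (F \<theta>) = \<theta>"
begin

lemma F_deriv: "(F \<theta> has_real_derivative F' \<theta> x) (at x)"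
  using F_solution unfolding cell_solution_def by blast

lemma continuous_on_F: "continuous_on S (F \<theta>)"
  using F_deriv by (rule has_real_derivative_imp_continuous_on)

lemma F_mono:
  assumes "\<theta>1 \<le> \<theta>2"
  shows "F \<theta>1 x \<le> F \<theta>2 x"
proof (cases "\<theta>1 = \<theta>2")
  case False
  then show ?thesis
    using assms by (intro cell_solution_le[OF F_solution F_solution G_deriv G'_cont])
      (simp add: F_integral)
qed simp

lemma F_uniformly_lipschitz:
  obtains M where "\<And>\<theta>. \<theta> \<in> {a..b} \<Longrightarrow> M-lipschitz_on {0..1} (F \<theta>)"
proof -
  obtain Aa Ab where "\<And>x. x \<in> {0..1} \<Longrightarrow> \<bar>F a x\<bar> \<le> Aa" "\<And>x. x \<in> {0..1} \<Longrightarrow> \<bar>F b x\<bar> \<le> Ab"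
    using continuous_on_compact_bound[OF compact_Icc continuous_on_F] by (metis real_norm_def)
  then have F_bound: "\<bar>F \<theta> x\<bar> \<le> max Aa Ab" if "\<theta> \<in> {a..b}" "x \<in> {0..1}" for \<theta> x
    using F_mono[of a \<theta> x] F_mono[of \<theta> b x] that by (force simp: abs_le_iff)
  obtain KG where "0 \<le> KG" and KG: "\<And>p. p \<in> {- max Aa Ab..max Aa Ab} \<Longrightarrow> \<bar>G p\<bar> \<le> KG"
    using continuous_on_compact_bound[OF compact_Icc has_real_derivative_imp_continuous_on[OF G_deriv]]
    by (metis real_norm_def)
  obtain KV where "0 \<le> KV" and KV: "\<And>x. x \<in> {0..1} \<Longrightarrow> \<bar>V x\<bar> \<le> KV"
    using continuous_on_compact_bound[OF compact_Icc continuous_on_subset[OF V_cont]]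
    by (metis real_norm_def top_greatest)
  show ?thesis
  proof (rule that)
    fix \<theta> assume "\<theta> \<in> {a..b}"
    then have "\<bar>G (F \<theta> x)\<bar> \<le> KG" if "x \<in> {0..1}" for x
      using KG[of "F \<theta> x"] F_bound[OF \<open>\<theta> \<in> {a..b}\<close> that] by (simp add: abs_le_iff)
    then have "\<bar>F' \<theta> x\<bar> \<le> 2 * (KG + KV)" if "x \<in> {0..1}" for x
      using cell_solution_deriv_bound[OF F_solution _ KV that] by blast
    then show "(2 * (KG + KV))-lipschitz_on {0..1} (F \<theta>)"
      using F_deriv \<open>0 \<le> KG\<close> \<open>0 \<le> KV\<close> by (intro lipschitz_on_if_abs_deriv_le) auto
  qed
qed

lemma integral_abs_diff_F: "integral {0..1} (\<lambda>x. \<bar>F \<theta>' x - F \<theta> x\<bar>) = \<bar>\<theta>' - \<theta>\<bar>"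
proof -
  have int: "integral {0..1} (\<lambda>x. F \<theta>1 x - F \<theta>2 x) = \<theta>1 - \<theta>2" for \<theta>1 \<theta>2
    by (simp add: integral_diff integrable_continuous_interval continuous_on_F F_integral)
  show ?thesis
  proof (cases "\<theta> \<le> \<theta>'")
    case True
    then show ?thesis using int[of \<theta>' \<theta>] F_mono[OF True] by simp
  next
    case False
    then have "\<bar>F \<theta>' x - F \<theta> x\<bar> = F \<theta> x - F \<theta>' x" for x
      using F_mono[of \<theta>' \<theta> x] by simp
    then show ?thesis using int[of \<theta> \<theta>'] False by simp
  qed
qed

lemma uniform_limit_F: "uniform_limit {0..1} F (F \<theta>) (at \<theta>)"
proof -
  obtain M where M: "\<And>\<theta>'. \<theta>' \<in> {\<theta> - 1..\<theta> + 1} \<Longrightarrow> M-lipschitz_on {0..1} (F \<theta>')"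
    using F_uniformly_lipschitz by blast
  define g where "g \<theta>' x = \<bar>F \<theta>' x - F \<theta> x\<bar>" for \<theta>' x
  have "(2 * M)-lipschitz_on {0..1} (g \<theta>')" if "\<theta>' \<in> {\<theta> - 1..\<theta> + 1}" for \<theta>'
  proof (rule lipschitz_onI)
    fix x y :: real assume "x \<in> {0..1}" "y \<in> {0..1}"
    then have "\<bar>F \<theta>' x - F \<theta>' y\<bar> \<le> M * \<bar>x - y\<bar>" "\<bar>F \<theta> x - F \<theta> y\<bar> \<le> M * \<bar>x - y\<bar>"
      using lipschitz_onD[OF M[OF that]] lipschitz_onD[OF M[of \<theta>]] by (auto simp: dist_real_def)
    then show "dist (g \<theta>' x) (g \<theta>' y) \<le> 2 * M * dist x y"
      by (simp add: g_def dist_real_def abs_le_iff) linarith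
  next
    show "0 \<le> 2 * M" using lipschitz_on_nonneg[OF M[of \<theta>]] by simp
  qed
  moreover have "\<forall>\<^sub>F \<theta>' in at \<theta>. \<theta>' \<in> {\<theta> - 1..\<theta> + 1}"
    using tendstoD[OF tendsto_ident_at zero_less_one, of \<theta> UNIV]
    by (rule eventually_mono) (auto simp: dist_real_def abs_less_iff)
  ultimately have "\<forall>\<^sub>F \<theta>' in at \<theta>. (2 * M)-lipschitz_on {0..1} (g \<theta>') \<and> (\<forall>x\<in>{0..1}. 0 \<le> g \<theta>' x)"
    by (auto elim: eventually_mono simp: g_def)
  moreover have "((\<lambda>\<theta>'. integral {0..1} (g \<theta>')) \<longlongrightarrow> 0) (at \<theta>)"
    unfolding g_def integral_abs_diff_F
    by (intro tendsto_rabs_zero LIM_zero tendsto_ident_at)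
  ultimately have "uniform_limit {0..1} g (\<lambda>_. 0) (at \<theta>)"
    by (rule uniform_limit_zero_if_integral_tendsto_zero)
  then show ?thesis
    by (simp add: uniform_limit_iff g_def dist_real_def)
qed

lemma cell_solution_eq_F:
  assumes u: "cell_solution G V u u'" and "integral {0..1} u = \<theta>" and x: "x \<in> {0..1}"
  shows "u x = F \<theta> x"
proof -
  have lim: "((\<lambda>\<theta>'. F \<theta>' x) \<longlongrightarrow> F \<theta> x) (at_left \<theta>)" "((\<lambda>\<theta>'. F \<theta>' x) \<longlongrightarrow> F \<theta> x) (at_right \<theta>)"
    using tendsto_uniform_limitI[OF uniform_limit_F x] by (simp_all add: filterlim_at_split)
  have "F \<theta>' x \<le> u x" if "\<theta>' < \<theta>" for \<theta>'
    using that assms by (intro cell_solution_le[OF F_solution u G_deriv G'_cont]) (simp add: F_integral)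
  then have "F \<theta> x \<le> u x"
    by (intro tendsto_le[OF trivial_limit_at_left_real tendsto_const lim(1)])
      (auto simp: eventually_at_left_field intro: exI[of _ "\<theta> - 1"])
  moreover have "u x \<le> F \<theta>' x" if "\<theta> < \<theta>'" for \<theta>'
    using that assms by (intro cell_solution_le[OF u F_solution G_deriv G'_cont]) (simp add: F_integral)
  then have "u x \<le> F \<theta> x"
    by (intro tendsto_le[OF trivial_limit_at_right_real lim(2) tendsto_const])
      (auto simp: eventually_at_right_field intro: exI[of _ "\<theta> + 1"])
  ultimately show ?thesis by simp
qed

lemma bdd_F: "bdd_above (F \<theta> ` {0..1})" "bdd_below (F \<theta> ` {0..1})"
  using compact_imp_bounded[OF compact_continuous_image[OF continuous_on_F compact_Icc]]
  by (auto intro: bounded_imp_bdd_above bounded_imp_bdd_below)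

lemma Sup_F_mono: "\<theta>1 \<le> \<theta>2 \<Longrightarrow> Sup (F \<theta>1 ` {0..1}) \<le> Sup (F \<theta>2 ` {0..1})"
  using F_mono bdd_F by (intro cSup_mono) force+

lemma Inf_F_mono: "\<theta>1 \<le> \<theta>2 \<Longrightarrow> Inf (F \<theta>1 ` {0..1}) \<le> Inf (F \<theta>2 ` {0..1})"
  using F_mono bdd_F by (intro cInf_mono) force+

lemma Inf_le_Sup_F: "Inf (F \<theta> ` {0..1}) \<le> Sup (F \<theta> ` {0..1})"
  using bdd_F by (intro cInf_le_cSup) auto

lemma isCont_Sup_F: "isCont (\<lambda>\<theta>. Sup (F \<theta> ` {0..1})) \<theta>"
  unfolding isCont_def using bdd_F
  by (intro tendsto_Sup_image_if_uniform_limit[OF uniform_limit_F]) auto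

lemma isCont_Inf_F: "isCont (\<lambda>\<theta>. Inf (F \<theta> ` {0..1})) \<theta>"
  unfolding isCont_def using bdd_F
  by (intro tendsto_Inf_image_if_uniform_limit[OF uniform_limit_F]) auto

lemma continuous_on_abs_G': "continuous_on UNIV (\<lambda>p. \<bar>G' p\<bar>)"
  using G'_cont by (rule continuous_on_rabs)

lemma K1_pair_mono_right:
  assumes "\<theta>1 \<le> \<theta>2" "\<theta>2 \<le> \<theta>3"
  shows "K1_pair G' F \<theta>1 \<theta>2 \<le> K1_pair G' F \<theta>1 \<theta>3"
  unfolding K1_pair_def
  by (rule Sup_image_atLeastAtMost_mono[OF continuous_on_abs_G'])
    (use assms Inf_le_Sup_F[of \<theta>1] Sup_F_mono[of \<theta>1 \<theta>2] Sup_F_mono[of \<theta>2 \<theta>3] in auto)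

lemma K1_pair_antimono_left:
  assumes "\<theta>1 \<le> \<theta>2" "\<theta>2 \<le> \<theta>3"
  shows "K1_pair G' F \<theta>2 \<theta>3 \<le> K1_pair G' F \<theta>1 \<theta>3"
  unfolding K1_pair_def
  by (rule Sup_image_atLeastAtMost_mono[OF continuous_on_abs_G'])
    (use assms Inf_le_Sup_F[of \<theta>2] Inf_F_mono[of \<theta>1 \<theta>2] Sup_F_mono[of \<theta>2 \<theta>3] in auto)

lemma tendsto_K1_pair_right:
  assumes "\<theta>1 \<le> \<theta>2"
  shows "((\<lambda>c. K1_pair G' F \<theta>1 (\<theta>2 + c)) \<longlongrightarrow> K1_pair G' F \<theta>1 \<theta>2) (at_right 0)"
proof -
  have "((\<lambda>c. \<theta>2 + c) \<longlongrightarrow> \<theta>2) (at_right 0)"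
    using tendsto_add[OF tendsto_const tendsto_ident_at, of \<theta>2 0 "{0<..}"] by simp
  then have "((\<lambda>c. Sup (F (\<theta>2 + c) ` {0..1})) \<longlongrightarrow> Sup (F \<theta>2 ` {0..1})) (at_right 0)"
    by (rule isCont_tendsto_compose[OF isCont_Sup_F])
  moreover have "\<forall>\<^sub>F c in at_right 0. Sup (F \<theta>2 ` {0..1}) \<le> Sup (F (\<theta>2 + c) ` {0..1})"
    using eventually_at_right_less by (rule eventually_mono) (simp add: Sup_F_mono)
  ultimately show ?thesis
    unfolding K1_pair_def
    using assms Inf_le_Sup_F[of \<theta>1] Sup_F_mono[of \<theta>1 \<theta>2]
    by (intro tendsto_Sup_image_atLeastAtMost continuous_on_abs_G' tendsto_const) auto
qed

lemma tendsto_K1_pair_left: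
  assumes "\<theta>1 \<le> \<theta>2"
  shows "((\<lambda>c. K1_pair G' F (\<theta>1 - c) \<theta>2) \<longlongrightarrow> K1_pair G' F \<theta>1 \<theta>2) (at_right 0)"
proof -
  have "((\<lambda>c. \<theta>1 - c) \<longlongrightarrow> \<theta>1) (at_right 0)"
    using tendsto_diff[OF tendsto_const tendsto_ident_at, of \<theta>1 0 "{0<..}"] by simp
  then have "((\<lambda>c. Inf (F (\<theta>1 - c) ` {0..1})) \<longlongrightarrow> Inf (F \<theta>1 ` {0..1})) (at_right 0)"
    by (rule isCont_tendsto_compose[OF isCont_Inf_F])
  moreover have "\<forall>\<^sub>F c in at_right 0. Inf (F (\<theta>1 - c) ` {0..1}) \<le> Inf (F \<theta>1 ` {0..1})"
    using eventually_at_right_less by (rule eventually_mono) (simp add: Inf_F_mono)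
  ultimately show ?thesis
    unfolding K1_pair_def
    using assms Inf_le_Sup_F[of \<theta>1] Sup_F_mono[of \<theta>1 \<theta>2]
    by (intro tendsto_Sup_image_atLeastAtMost continuous_on_abs_G' tendsto_const) auto
qed

end

theorem lemma5p2:
  fixes G G' G'' :: "real \<Rightarrow> real"
    and p1 p2 L ell :: real
    and f f' V :: "real \<Rightarrow> real"
    and \<theta>0 :: real
    and F F' :: "real \<Rightarrow> real \<Rightarrow> real"
  assumes G_deriv: "\<And>p. (G has_real_derivative G' p) (at p)"
    and G'_deriv: "\<And>p. (G' has_real_derivative G'' p) (at p)"
    and G''_cont: "continuous_on UNIV G''"
    and G_coercive_top: "filterlim G at_top at_top"
    and G_coercive_bot: "filterlim G at_top at_bot"
    and p12: "p1 < p2"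
    and Gp1: "G' p1 < 0" and Gp2: "0 < G' p2"
    and L_def: "L = G' p2 / (G' p2 - G' p1)"
    and ell_pos: "0 < ell" and ell_lt: "ell < min L (1 - L)"
    and f_deriv: "\<And>x. (f has_real_derivative f' x) (at x)"
    and f'_lip: "\<exists>C. \<forall>x y. \<bar>f' x - f' y\<bar> \<le> C * \<bar>x - y\<bar>"
    and f_per: "\<And>x. f (x + 1) = f x"
    and f_bounds: "\<And>x. p1 \<le> f x \<and> f x \<le> p2"
    and f_left: "\<And>x. x \<in> {0..L - ell} \<Longrightarrow> f x = p1"
    and f_right: "\<And>x. x \<in> {L..1 - ell} \<Longrightarrow> f x = p2"
    and f_int: "integral {0..1} (\<lambda>x. G' (f x)) = 0"
    and V_def: "\<And>x. V x = - f' x - G (f x)"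
    and theta0_def: "\<theta>0 = integral {0..1} f"
    and F_deriv: "\<And>\<theta> x. (F \<theta> has_real_derivative F' \<theta> x) (at x)"
    and F'_cont: "\<And>\<theta>. continuous_on UNIV (F' \<theta>)"
    and F_per: "\<And>\<theta> x. F \<theta> (x + 1) = F \<theta> x"
    and F_int: "\<And>\<theta>. integral {0..1} (F \<theta>) = \<theta>"
    and F_cell: "\<And>\<theta>. \<exists>H. \<forall>x. F' \<theta> x + G (F \<theta> x) + V x = H"
  shows "(\<forall>c1 c2. 0 < c1 \<and> c1 \<le> c2 \<longrightarrow>
            K1_pair G' F \<theta>0 (\<theta>0 + c1) \<le> K1_pair G' F \<theta>0 (\<theta>0 + c2))
       \<and> ((\<lambda>c. K1_pair G' F \<theta>0 (\<theta>0 + c)) \<longlongrightarrow> Sup ((\<lambda>p. \<bar>G' p\<bar>) ` {p1..p2})) (at_right 0)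
       \<and> (\<forall>c1 c2. 0 < c1 \<and> c1 \<le> c2 \<longrightarrow>
            K1_pair G' F (\<theta>0 - c1) \<theta>0 \<le> K1_pair G' F (\<theta>0 - c2) \<theta>0)
       \<and> ((\<lambda>c. K1_pair G' F (\<theta>0 - c) \<theta>0) \<longlongrightarrow> Sup ((\<lambda>p. \<bar>G' p\<bar>) ` {p1..p2})) (at_right 0)"
proof -
  \<comment> \<open>The hypotheses on G'', the coercivity of G and the integral condition on f only serve
    to guarantee the existence of the solutions F, which are given here.\<close>
  obtain C where C: "\<And>x y. \<bar>f' x - f' y\<bar> \<le> C * \<bar>x - y\<bar>"
    using f'_lip by blast
  have "continuous_on UNIV V"
    unfolding V_def[abs_def]
    by (intro continuous_on_diff continuous_on_minus continuous_on_compose2[of UNIV G UNIV f]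
        has_real_derivative_imp_continuous_on[OF G_deriv] has_real_derivative_imp_continuous_on[OF f_deriv]
        continuous_on_if_lipschitz_estimate[OF C]) auto
  then interpret periodic_cell_problem G G' V F F'
    using G_deriv has_real_derivative_imp_continuous_on[OF G'_deriv] F_deriv F_per F_cell F_int
    by unfold_locales (auto simp: cell_solution_def)
  have "cell_solution G V f f'"
    using f_deriv f_per V_def by (auto simp: cell_solution_def)
  then have "F \<theta>0 ` {0..1} = f ` {0..1}"
    using cell_solution_eq_F[of f f' \<theta>0] theta0_def by (intro image_cong) auto
  moreover have "Inf (f ` {0..1}) = p1"
    by (rule cInf_eq_minimum) (use f_left[of 0] ell_lt f_bounds in force)+
  moreover have "Sup (f ` {0..1}) = p2"
    by (rule cSup_eq_maximum) (use f_right[of L] ell_pos ell_lt f_bounds in force)+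
  ultimately have K1: "K1_pair G' F \<theta>0 \<theta>0 = Sup ((\<lambda>p. \<bar>G' p\<bar>) ` {p1..p2})"
    by (simp add: K1_pair_def)
  show ?thesis
    unfolding K1[symmetric]
    using K1_pair_mono_right[of \<theta>0] K1_pair_antimono_left[of _ _ \<theta>0]
      tendsto_K1_pair_right[of \<theta>0 \<theta>0] tendsto_K1_pair_left[of \<theta>0 \<theta>0]
    by simp
qed

end
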